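(* For every regular social purpose game $\Gamma$ and every level of cooperation $k\in\{2,\dots,n\}$, there exists at least one partial cooperative leadership equilibrium of $\Gamma$ at level $k$.
   Context: A social purpose game $\Gamma=\langle N,\overline{Q},H,(\alpha_i,h_i,g_i)_{i\in N}\rangle$ consists of a player set $N=\{1,\dots,n\}$ with $n\ge 2$, a number $\overline{Q}>0$ such that every player's strategy set is $S_i=[0,\overline{Q}]$, a function $H\colon\mathbb{R}\to\mathbb{R}$, and for each $i\in N$ a weight $\alpha_i>0$ and functions $h_i,g_i\colon[0,\overline{Q}]\to\mathbb{R}$, with players ordered so that $0<\alpha_1\le\dots\le\alpha_n$. The payoff of player $i$ at $x\in[0,\overline{Q}]^N$ is $\pi_i(x)=\alpha_i H\big(\sum_{j=1}^n h_j(x_j)\big)-g_i(x_i)$. $\Gamma$ is regular if: each $h_i$ is the identity; $H$ is continuously differentiable, increasing and concave; and each $g_i$ is continuously differentiable, increasing and convex. For a level of cooperation $k\in\{2,\dots,n\}$, let $C_k=\{n-k+1,\dots,n\}$ (cooperators) and $N_k=N\setminus C_k=\{1,\dots,n-k\}$ (non-cooperators); write profiles as $(x^{N_k},x^{C_k})$ with $x^{N_k}\in[0,\overline{Q}]^{N_k}$, $x^{C_k}\in[0,\overline{Q}]^{C_k}$. For fixed $x^{C_k}$, $\mathrm{NE}(x^{C_k})\subseteq[0,\overline{Q}]^{N_k}$ is the set of Nash equilibria of the game with player set $N_k$, strategy sets $[0,\overline{Q}]$ and payoffs $x^{N_k}\mapsto\pi_j(x^{N_k},x^{C_k})$, $j\in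 N_k$ (when $N_k=\emptyset$ this set consists of the empty profile). Define $\tilde\pi(x^{C_k})=\min_{x^{N_k}\in\mathrm{NE}(x^{C_k})}\sum_{i\in C_k}\pi_i(x^{N_k},x^{C_k})$. A partial cooperative leadership equilibrium (PCLE) at level $k$ is a profile $(x^{N_k}_*,x^{C_k}_* )$ such that $x^{C_k}_*$ maximizes $\tilde\pi$ over $[0,\overline{Q}]^{C_k}$ and $x^{N_k}_*\in\arg\min_{x^{N_k}\in\mathrm{NE}(x^{C_k}_* )}\sum_{i\in C_k}\pi_i(x^{N_k},x^{C_k}_* )$. *)

theory Defs
  imports "HOL-Analysis.Analysis"
begin

text \<open>A social purpose game is given by n, Qbar, H, alpha, h, g. Players are 1..n;
  profiles are functions nat => real whose values on 1..n lie in [0,Qbar]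
  (values outside 1..n are irrelevant).\<close>

definition spg_payoff ::
  "nat \<Rightarrow> (real \<Rightarrow> real) \<Rightarrow> (nat \<Rightarrow> real) \<Rightarrow> (nat \<Rightarrow> real \<Rightarrow> real) \<Rightarrow> (nat \<Rightarrow> real \<Rightarrow> real)
    \<Rightarrow> nat \<Rightarrow> (nat \<Rightarrow> real) \<Rightarrow> real" where
  "spg_payoff n H \<alpha> h g i x = \<alpha> i * H (\<Sum>j\<in>{1..n}. h j (x j)) - g i (x i)"

definition social_purpose_game :: "nat \<Rightarrow> real \<Rightarrow> (nat \<Rightarrow> real) \<Rightarrow> bool" where
  "social_purpose_game n Q \<alpha> \<longleftrightarrow> n \<ge> 2 \<and> Q > 0 \<and> (\<forall>i\<in>{1..n}. \<alpha> i > 0)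
     \<and> (\<forall>i j. 1 \<le> i \<and> i \<le> j \<and> j \<le> n \<longrightarrow> \<alpha> i \<le> \<alpha> j)"

definition continuously_differentiable_on_interval :: "real \<Rightarrow> real \<Rightarrow> (real \<Rightarrow> real) \<Rightarrow> bool" where
  "continuously_differentiable_on_interval a b f \<longleftrightarrow>
     (\<exists>f'. continuous_on {a..b} f' \<and> (\<forall>t\<in>{a..b}. (f has_real_derivative f' t) (at t within {a..b})))"

definition regular_spg ::
  "nat \<Rightarrow> real \<Rightarrow> (real \<Rightarrow> real) \<Rightarrow> (nat \<Rightarrow> real) \<Rightarrow> (nat \<Rightarrow> real \<Rightarrow> real) \<Rightarrow> (nat \<Rightarrow> real \<Rightarrow> real) \<Rightarrow> bool" where
  "regular_spg n Q H \<alpha> h g \<longleftrightarrow>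
     social_purpose_game n Q \<alpha>
     \<and> (\<forall>i\<in>{1..n}. \<forall>t\<in>{0..Q}. h i t = t)
     \<and> (\<exists>H'. continuous_on UNIV H' \<and> (\<forall>t. (H has_real_derivative H' t) (at t)))
     \<and> mono H \<and> concave_on UNIV H
     \<and> (\<forall>i\<in>{1..n}. continuously_differentiable_on_interval 0 Q (g i)
                     \<and> mono_on {0..Q} (g i) \<and> convex_on {0..Q} (g i))"

definition spg_profiles :: "nat \<Rightarrow> real \<Rightarrow> (nat \<Rightarrow> real) set" where
  "spg_profiles n Q = {x. \<forall>i\<in>{1..n}. x i \<in> {0..Q}}"

definition cooperators :: "nat \<Rightarrow> nat \<Rightarrow> nat set" where
  "cooperators n k = {n - k + 1..n}"

definition noncooperators :: "nat \<Rightarrow> nat \<Rightarrow> nat set" where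
  "noncooperators n k = {1..n - k}"

definition noncoop_NE ::
  "nat \<Rightarrow> real \<Rightarrow> (real \<Rightarrow> real) \<Rightarrow> (nat \<Rightarrow> real) \<Rightarrow> (nat \<Rightarrow> real \<Rightarrow> real) \<Rightarrow> (nat \<Rightarrow> real \<Rightarrow> real)
    \<Rightarrow> nat \<Rightarrow> (nat \<Rightarrow> real) \<Rightarrow> bool" where
  "noncoop_NE n Q H \<alpha> h g k x \<longleftrightarrow> x \<in> spg_profiles n Q \<and>
     (\<forall>j\<in>noncooperators n k. \<forall>t\<in>{0..Q}.
        spg_payoff n H \<alpha> h g j (x(j := t)) \<le> spg_payoff n H \<alpha> h g j x)"

definition coop_sum ::
  "nat \<Rightarrow> (real \<Rightarrow> real) \<Rightarrow> (nat \<Rightarrow> real) \<Rightarrow> (nat \<Rightarrow> real \<Rightarrow> real) \<Rightarrow> (nat \<Rightarrow> real \<Rightarrow> real)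
    \<Rightarrow> nat \<Rightarrow> (nat \<Rightarrow> real) \<Rightarrow> real" where
  "coop_sum n H \<alpha> h g k x = (\<Sum>i\<in>cooperators n k. spg_payoff n H \<alpha> h g i x)"

definition NE_given ::
  "nat \<Rightarrow> real \<Rightarrow> (real \<Rightarrow> real) \<Rightarrow> (nat \<Rightarrow> real) \<Rightarrow> (nat \<Rightarrow> real \<Rightarrow> real) \<Rightarrow> (nat \<Rightarrow> real \<Rightarrow> real)
    \<Rightarrow> nat \<Rightarrow> (nat \<Rightarrow> real) \<Rightarrow> (nat \<Rightarrow> real) set" where
  "NE_given n Q H \<alpha> h g k x =
     {z. noncoop_NE n Q H \<alpha> h g k z \<and> (\<forall>i\<in>cooperators n k. z i = x i)}"

definition tilde_pi ::
  "nat \<Rightarrow> real \<Rightarrow> (real \<Rightarrow> real) \<Rightarrow> (nat \<Rightarrow> real) \<Rightarrow> (nat \<Rightarrow> real \<Rightarrow> real) \<Rightarrow> (nat \<Rightarrow> real \<Rightarrow> real)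
    \<Rightarrow> nat \<Rightarrow> (nat \<Rightarrow> real) \<Rightarrow> real" where
  "tilde_pi n Q H \<alpha> h g k x = Inf (coop_sum n H \<alpha> h g k ` NE_given n Q H \<alpha> h g k x)"

definition is_PCLE ::
  "nat \<Rightarrow> real \<Rightarrow> (real \<Rightarrow> real) \<Rightarrow> (nat \<Rightarrow> real) \<Rightarrow> (nat \<Rightarrow> real \<Rightarrow> real) \<Rightarrow> (nat \<Rightarrow> real \<Rightarrow> real)
    \<Rightarrow> nat \<Rightarrow> (nat \<Rightarrow> real) \<Rightarrow> bool" where
  "is_PCLE n Q H \<alpha> h g k x \<longleftrightarrow>
     x \<in> spg_profiles n Q
     \<and> (\<forall>y\<in>spg_profiles n Q. tilde_pi n Q H \<alpha> h g k y \<le> tilde_pi n Q H \<alpha> h g k x)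
     \<and> x \<in> NE_given n Q H \<alpha> h g k x
     \<and> (\<forall>z\<in>NE_given n Q H \<alpha> h g k x. coop_sum n H \<alpha> h g k x \<le> coop_sum n H \<alpha> h g k z)"

end

theory Submission
  imports Defs
begin

text \<open>Fix the cooperators' total contribution T. A noncooperator's payoff is concave in its own
  strategy, so its best responses to an aggregate S form the interval between the least and the
  greatest solution of the first-order condition \<open>\<alpha>\<^sub>j H'(S) = g\<^sub>j'(x)\<close> (corrected at the
  boundary of [0, Q]). As H' is decreasing, the least response is antitone in S, and the least
  equilibrium aggregate is the least S with \<open>T + \<Sum>\<^sub>j least response\<^sub>j(S) \<le> S\<close>; it depends
  1-Lipschitz on T. Since H is increasing, the equilibrium with this aggregate is the worst one
  for the cooperators, so their guaranteed payoff is a continuous function of their strategies.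
  It attains its maximum on the compact strategy box, and a maximiser together with its worst
  equilibrium is a partial cooperative leadership equilibrium.\<close>

section \<open>Tangents of convex functions and eventual bounds\<close>

lemma convex_on_Icc_derivative_le_slope:
  fixes f :: "real \<Rightarrow> real"
  assumes conv: "convex_on {a..b} f" and c: "c \<in> {a..b}" and x: "x \<in> {a..b}" and "c < x"
    and deriv: "(f has_real_derivative f') (at c within {a..b})"
  shows "f' \<le> (f x - f c) / (x - c)"
proof -
  let ?A = "{c<..<x}"
  have "at c within ?A \<noteq> bot" using \<open>c < x\<close> by (subst at_within_eq_bot_iff) auto
  moreover from deriv have "((\<lambda>y. (f y - f c) / (y - c)) \<longlongrightarrow> f') (at c within ?A)"
    unfolding has_field_derivative_iff using c x
    by (elim tendsto_mono[rotated]) (intro at_le, auto)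
  moreover have "eventually (\<lambda>y. (f y - f c) / (y - c) \<le> (f x - f c) / (x - c)) (at c within ?A)"
    unfolding eventually_at_filter
  proof (rule always_eventually, intro allI impI)
    fix y assume y: "y \<in> ?A"
    with conv x c have "f y \<le> (f x - f c) / (x - c) * (y - c) + f c"
      by (intro convex_onD_Icc' convex_on_subset[OF conv]) auto
    then have "f y - f c \<le> (f x - f c) / (x - c) * (y - c)" by simp
    then show "(f y - f c) / (y - c) \<le> (f x - f c) / (x - c)"
      using y by (simp add: field_split_simps)
  qed
  ultimately show ?thesis by (simp add: tendsto_upperbound)
qed

lemma convex_on_Icc_slope_le_derivative:
  fixes f :: "real \<Rightarrow> real"
  assumes conv: "convex_on {a..b} f" and c: "c \<in> {a..b}" and x: "x \<in> {a..b}" and "x < c"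
    and deriv: "(f has_real_derivative f') (at c within {a..b})"
  shows "(f x - f c) / (x - c) \<le> f'"
proof -
  let ?A = "{x<..<c}"
  have "at c within ?A \<noteq> bot" using \<open>x < c\<close> by (subst at_within_eq_bot_iff) auto
  moreover from deriv have "((\<lambda>y. (f y - f c) / (y - c)) \<longlongrightarrow> f') (at c within ?A)"
    unfolding has_field_derivative_iff using c x
    by (elim tendsto_mono[rotated]) (intro at_le, auto)
  moreover have "eventually (\<lambda>y. (f x - f c) / (x - c) \<le> (f y - f c) / (y - c)) (at c within ?A)"
    unfolding eventually_at_filter
  proof (rule always_eventually, intro allI impI)
    fix y assume y: "y \<in> ?A"
    with conv x c have "f y \<le> (f x - f c) / (c - x) * (c - y) + f c"
      by (intro convex_onD_Icc'' convex_on_subset[OF conv]) auto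
    then have "f y - f c \<le> (f x - f c) * ((c - y) / (c - x))" by simp
    also have "(c - y) / (c - x) = (y - c) / (x - c)" using y \<open>x < c\<close> by (simp add: field_simps)
    finally show "(f x - f c) / (x - c) \<le> (f y - f c) / (y - c)"
      using y by (simp add: field_split_simps)
  qed
  ultimately show ?thesis by (simp add: tendsto_lowerbound)
qed

lemma convex_on_Icc_above_tangent:
  fixes f :: "real \<Rightarrow> real"
  assumes "convex_on {a..b} f" and "c \<in> {a..b}" and "x \<in> {a..b}"
    and "(f has_real_derivative f') (at c within {a..b})"
  shows "f' * (x - c) \<le> f x - f c"
proof (cases x c rule: linorder_cases)
  case less
  with convex_on_Icc_slope_le_derivative[OF assms(1-3) less assms(4)] show ?thesis
    by (simp add: field_simps)
next
  case greater
  with convex_on_Icc_derivative_le_slope[OF assms(1-3) greater assms(4)] show ?thesis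
    by (simp add: field_simps)
qed simp

lemma convex_on_Icc_imp_mono_derivative:
  fixes f :: "real \<Rightarrow> real"
  assumes conv: "convex_on {a..b} f"
    and deriv: "\<And>t. t \<in> {a..b} \<Longrightarrow> (f has_real_derivative f' t) (at t within {a..b})"
  shows "mono_on {a..b} f'"
proof (rule mono_onI)
  fix x y assume x: "x \<in> {a..b}" and y: "y \<in> {a..b}" and "x \<le> y"
  have "f' x * (y - x) \<le> f y - f x" "f' y * (x - y) \<le> f x - f y"
    using convex_on_Icc_above_tangent[OF conv] x y deriv by blast+
  then have "0 \<le> (f' y - f' x) * (y - x)" by (simp add: algebra_simps)
  with \<open>x \<le> y\<close> show "f' x \<le> f' y"
    by (cases "x = y") (auto simp: zero_le_mult_iff)
qed

lemma concave_on_UNIV_below_tangent: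
  fixes f :: "real \<Rightarrow> real"
  assumes "concave_on UNIV f" and "(f has_real_derivative f') (at s)"
  shows "f t \<le> f s + f' * (t - s)"
proof -
  have "- f' * (t - s) \<le> - f t - - f s"
    using assms by (intro convex_on_imp_above_tangent) (auto simp: concave_on_def intro: derivative_eq_intros)
  thus ?thesis by (simp add: algebra_simps)
qed

lemma concave_on_UNIV_imp_antimono_derivative:
  fixes f :: "real \<Rightarrow> real"
  assumes conc: "concave_on UNIV f" and deriv: "\<And>t. (f has_real_derivative f' t) (at t)"
  shows "antimono f'"
proof (rule antimonoI)
  fix s t :: real assume "s \<le> t"
  have "f t \<le> f s + f' s * (t - s)" "f s \<le> f t + f' t * (s - t)"
    by (rule concave_on_UNIV_below_tangent[OF conc deriv])+
  then have "0 \<le> (f' s - f' t) * (t - s)" by (simp add: algebra_simps)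
  with \<open>s \<le> t\<close> show "f' t \<le> f' s"
    by (cases "s = t") (auto simp: zero_le_mult_iff)
qed

lemma open_Collect_eventually:
  assumes "\<And>x. P x \<Longrightarrow> eventually P (nhds x)"
  shows "open {x. P x}"
  unfolding open_subopen[of "{x. P x}"]
proof
  fix x assume "x \<in> {x. P x}"
  then have "eventually P (nhds x)" using assms by simp
  then obtain S where "open S" "x \<in> S" "\<forall>y\<in>S. P y" unfolding eventually_nhds by blast
  then show "\<exists>S. open S \<and> x \<in> S \<and> S \<subseteq> {x. P x}" by blast
qed

lemma eventually_sum_gt:
  fixes f :: "'i \<Rightarrow> 'a \<Rightarrow> real"
  assumes "finite A"
    and "\<And>j e. j \<in> A \<Longrightarrow> 0 < e \<Longrightarrow> eventually (\<lambda>x. c j - e < f j x) F"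
    and "0 < e"
  shows "eventually (\<lambda>x. (\<Sum>j\<in>A. c j) - e < (\<Sum>j\<in>A. f j x)) F"
  using assms
proof (induction A arbitrary: e rule: finite_induct)
  case (insert j A)
  have "eventually (\<lambda>x. c j - e/2 < f j x) F"
    using insert.prems by simp
  moreover have "eventually (\<lambda>x. (\<Sum>i\<in>A. c i) - e/2 < (\<Sum>i\<in>A. f i x)) F"
    using insert.prems by (intro insert.IH) auto
  ultimately show ?case by eventually_elim (use insert.hyps in simp)
qed simp

section \<open>Best responses to a marginal benefit\<close>

text \<open>Facing a constant marginal benefit p, a strategy x in [0, Q] with marginal cost \<open>c' x\<close>
  cannot gain by a small increase iff x = Q or \<open>p \<le> c' x\<close>, nor by a small decrease iff x = 0
  or \<open>c' x \<le> p\<close>. For nondecreasing \<open>c'\<close> and convex cost the best responses are exactly the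
  points of both sets, i.e. the interval from the least to the greatest best response.\<close>

definition increase_unprofitable :: "real \<Rightarrow> (real \<Rightarrow> real) \<Rightarrow> real \<Rightarrow> real set" where
  "increase_unprofitable Q c' p = {x \<in> {0..Q}. x = Q \<or> p \<le> c' x}"

definition decrease_unprofitable :: "real \<Rightarrow> (real \<Rightarrow> real) \<Rightarrow> real \<Rightarrow> real set" where
  "decrease_unprofitable Q c' p = {x \<in> {0..Q}. x = 0 \<or> c' x \<le> p}"

definition least_best_response :: "real \<Rightarrow> (real \<Rightarrow> real) \<Rightarrow> real \<Rightarrow> real" where
  "least_best_response Q c' p = Inf (increase_unprofitable Q c' p)"

definition greatest_best_response :: "real \<Rightarrow> (real \<Rightarrow> real) \<Rightarrow> real \<Rightarrow> real" where
  "greatest_best_response Q c' p = Sup (decrease_unprofitable Q c' p)"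

locale marginal_cost =
  fixes Q :: real and c' :: "real \<Rightarrow> real"
  assumes Q_nonneg: "0 \<le> Q" and c'_mono: "mono_on {0..Q} c'"
    and c'_continuous: "continuous_on {0..Q} c'"
begin

lemma closed_increase_unprofitable: "closed (increase_unprofitable Q c' p)"
proof -
  have "increase_unprofitable Q c' p = {Q} \<union> {x \<in> {0..Q}. p \<le> c' x}"
    using Q_nonneg by (auto simp: increase_unprofitable_def)
  moreover have "closed {x \<in> {0..Q}. p \<le> c' x}"
    by (intro continuous_on_closed_Collect_le c'_continuous continuous_on_const) auto
  ultimately show ?thesis by auto
qed

lemma closed_decrease_unprofitable: "closed (decrease_unprofitable Q c' p)"
proof -
  have "decrease_unprofitable Q c' p = {0} \<union> {x \<in> {0..Q}. c' x \<le> p}"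
    using Q_nonneg by (auto simp: decrease_unprofitable_def)
  moreover have "closed {x \<in> {0..Q}. c' x \<le> p}"
    by (intro continuous_on_closed_Collect_le c'_continuous continuous_on_const) auto
  ultimately show ?thesis by auto
qed

lemma least_best_response_mem: "least_best_response Q c' p \<in> increase_unprofitable Q c' p"
  unfolding least_best_response_def
proof (rule closed_contains_Inf[OF _ _ closed_increase_unprofitable])
  show "increase_unprofitable Q c' p \<noteq> {}" using Q_nonneg by (auto simp: increase_unprofitable_def)
  show "bdd_below (increase_unprofitable Q c' p)"
    by (rule bdd_belowI[of _ 0]) (auto simp: increase_unprofitable_def)
qed

lemma greatest_best_response_mem: "greatest_best_response Q c' p \<in> decrease_unprofitable Q c' p"
  unfolding greatest_best_response_def
proof (rule closed_contains_Sup[OF _ _ closed_decrease_unprofitable])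
  show "decrease_unprofitable Q c' p \<noteq> {}" using Q_nonneg by (auto simp: decrease_unprofitable_def)
  show "bdd_above (decrease_unprofitable Q c' p)"
    by (rule bdd_aboveI[of _ Q]) (auto simp: decrease_unprofitable_def)
qed

lemma least_best_response_bounds: "least_best_response Q c' p \<in> {0..Q}"
  using least_best_response_mem by (simp add: increase_unprofitable_def)

lemma greatest_best_response_bounds: "greatest_best_response Q c' p \<in> {0..Q}"
  using greatest_best_response_mem by (simp add: decrease_unprofitable_def)

lemma least_best_response_le_iff:
  assumes x: "x \<in> {0..Q}"
  shows "least_best_response Q c' p \<le> x \<longleftrightarrow> x \<in> increase_unprofitable Q c' p"
proof
  let ?b = "least_best_response Q c' p"
  assume le: "?b \<le> x"
  show "x \<in> increase_unprofitable Q c' p"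
  proof (cases "x = Q")
    case False
    with le x have "?b \<noteq> Q" by auto
    then have "p \<le> c' ?b"
      using least_best_response_mem[of p] by (simp add: increase_unprofitable_def)
    also have "c' ?b \<le> c' x"
      using le x least_best_response_bounds by (intro mono_onD[OF c'_mono]) auto
    finally show ?thesis using x by (simp add: increase_unprofitable_def)
  qed (use x in \<open>simp add: increase_unprofitable_def\<close>)
next
  assume "x \<in> increase_unprofitable Q c' p"
  then show "least_best_response Q c' p \<le> x" unfolding least_best_response_def
    by (rule cInf_lower) (auto intro: bdd_belowI[of _ 0] simp: increase_unprofitable_def)
qed

lemma le_greatest_best_response_iff:
  assumes x: "x \<in> {0..Q}"
  shows "x \<le> greatest_best_response Q c' p \<longleftrightarrow> x \<in> decrease_unprofitable Q c' p"
proof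
  let ?b = "greatest_best_response Q c' p"
  assume le: "x \<le> ?b"
  show "x \<in> decrease_unprofitable Q c' p"
  proof (cases "x = 0")
    case False
    have "c' x \<le> c' ?b"
      using le x greatest_best_response_bounds by (intro mono_onD[OF c'_mono]) auto
    also have "c' ?b \<le> p"
      using False le x greatest_best_response_mem[of p] by (simp add: decrease_unprofitable_def)
    finally show ?thesis using x by (simp add: decrease_unprofitable_def)
  qed (use x in \<open>simp add: decrease_unprofitable_def\<close>)
next
  assume "x \<in> decrease_unprofitable Q c' p"
  then show "x \<le> greatest_best_response Q c' p" unfolding greatest_best_response_def
    by (rule cSup_upper) (auto intro: bdd_aboveI[of _ Q] simp: decrease_unprofitable_def)
qed

lemma least_best_response_mono:
  assumes "p \<le> p'"
  shows "least_best_response Q c' p \<le> least_best_response Q c' p'"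
  using least_best_response_mem[of p'] assms least_best_response_bounds
  by (subst least_best_response_le_iff) (auto simp: increase_unprofitable_def)

lemma least_le_greatest_best_response:
  "least_best_response Q c' p \<le> greatest_best_response Q c' p"
proof (cases "least_best_response Q c' p = 0")
  case False
  let ?b = "least_best_response Q c' p"
  have b: "0 < ?b" "?b \<le> Q" using False least_best_response_bounds[of p] by auto
  have "{0..<?b} \<subseteq> {x \<in> {0..Q}. c' x \<le> p}"
  proof
    fix y assume "y \<in> {0..<?b}"
    then have "y \<in> {0..Q}" "y \<notin> increase_unprofitable Q c' p"
      using b least_best_response_le_iff[of y p] by auto
    then show "y \<in> {x \<in> {0..Q}. c' x \<le> p}" by (auto simp: increase_unprofitable_def)
  qed
  then have "closure {0..<?b} \<subseteq> {x \<in> {0..Q}. c' x \<le> p}"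
    by (intro closure_minimal continuous_on_closed_Collect_le c'_continuous continuous_on_const) auto
  moreover have "?b \<in> closure {0..<?b}" using b by simp
  ultimately have "?b \<in> decrease_unprofitable Q c' p"
    by (auto simp: decrease_unprofitable_def)
  then show ?thesis using b le_greatest_best_response_iff by simp
qed (use greatest_best_response_bounds in simp)

lemma eventually_least_best_response_gt:
  assumes "(\<pi> \<longlongrightarrow> p) F" and "0 < e"
  shows "eventually (\<lambda>s. least_best_response Q c' p - e < least_best_response Q c' (\<pi> s)) F"
proof (cases "least_best_response Q c' p - e < 0")
  case True
  show ?thesis
  proof (intro always_eventually allI)
    fix s show "least_best_response Q c' p - e < least_best_response Q c' (\<pi> s)"
      using True least_best_response_bounds[of "\<pi> s"] by simp
  qed
next
  case False
  define x where "x = least_best_response Q c' p - e"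
  have x: "x \<in> {0..Q}" "x < least_best_response Q c' p"
    using False assms(2) least_best_response_bounds[of p] by (auto simp: x_def)
  then have "x \<noteq> Q" "c' x < p"
    using least_best_response_le_iff[of x p] by (auto simp: increase_unprofitable_def)
  from order_tendstoD(1)[OF assms(1) this(2)] show ?thesis
  proof eventually_elim
    case (elim s)
    with \<open>x \<noteq> Q\<close> have "x \<notin> increase_unprofitable Q c' (\<pi> s)"
      by (auto simp: increase_unprofitable_def)
    then have "\<not> least_best_response Q c' (\<pi> s) \<le> x" using least_best_response_le_iff[OF x(1)] by simp
    then show ?case by (simp add: x_def)
  qed
qed

lemma eventually_least_best_response_lt:
  assumes "(\<pi> \<longlongrightarrow> p) F" and "0 < e"
  shows "eventually (\<lambda>s. least_best_response Q c' (\<pi> s) < greatest_best_response Q c' p + e) F"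
proof (cases "Q < greatest_best_response Q c' p + e/2")
  case True
  show ?thesis
  proof (intro always_eventually allI)
    fix s show "least_best_response Q c' (\<pi> s) < greatest_best_response Q c' p + e"
      using True assms(2) least_best_response_bounds[of "\<pi> s"] by simp
  qed
next
  case False
  define x where "x = greatest_best_response Q c' p + e/2"
  have x: "x \<in> {0..Q}" "greatest_best_response Q c' p < x"
    using False assms(2) greatest_best_response_bounds[of p] by (auto simp: x_def)
  then have "p < c' x"
    using le_greatest_best_response_iff[of x p] by (auto simp: decrease_unprofitable_def)
  from order_tendstoD(2)[OF assms(1) this] show ?thesis
  proof eventually_elim
    case (elim s)
    with x have "least_best_response Q c' (\<pi> s) \<le> x"
      by (subst least_best_response_le_iff) (auto simp: increase_unprofitable_def)
    then show ?case using x by (simp add: x_def)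
  qed
qed

end

lemma first_order_conditions_imp_best_response:
  fixes H c c' :: "real \<Rightarrow> real"
  assumes conc: "concave_on UNIV H" and H': "(H has_real_derivative D) (at S)"
    and conv: "convex_on {0..Q} c" and c': "(c has_real_derivative c' y) (at y within {0..Q})"
    and a: "0 \<le> a"
    and up: "y \<in> increase_unprofitable Q c' (a * D)"
    and down: "y \<in> decrease_unprofitable Q c' (a * D)"
    and t: "t \<in> {0..Q}"
  shows "a * H (S - y + t) - c t \<le> a * H S - c y"
proof -
  have y: "y \<in> {0..Q}" using up by (simp add: increase_unprofitable_def)
  have "H (S - y + t) \<le> H S + D * (t - y)"
    using concave_on_UNIV_below_tangent[OF conc H', of "S - y + t"] by simp
  then have benefit: "a * H (S - y + t) \<le> a * H S + a * D * (t - y)"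
    using a by (auto dest: mult_left_mono[of _ _ a] simp: algebra_simps)
  have cost: "c' y * (t - y) \<le> c t - c y"
    by (rule convex_on_Icc_above_tangent[OF conv y t c'])
  have "(a * D - c' y) * (t - y) \<le> 0"
  proof (cases "t \<le> y")
    case True
    with down t have "t = y \<or> c' y \<le> a * D" by (auto simp: decrease_unprofitable_def)
    with True show ?thesis by (auto simp: mult_nonneg_nonpos)
  next
    case False
    with up t have "a * D \<le> c' y" by (auto simp: increase_unprofitable_def)
    with False show ?thesis by (simp add: mult_nonpos_nonneg)
  qed
  with benefit cost show ?thesis by (simp add: algebra_simps)
qed

lemma best_response_imp_increase_unprofitable:
  fixes H c c' :: "real \<Rightarrow> real"
  assumes H': "(H has_real_derivative D) (at S)"
    and c': "(c has_real_derivative c' y) (at y within {0..Q})" and y: "y \<in> {0..Q}"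
    and best: "\<And>t. t \<in> {0..Q} \<Longrightarrow> a * H (S - y + t) - c t \<le> a * H S - c y"
  shows "y \<in> increase_unprofitable Q c' (a * D)"
proof (rule ccontr)
  assume "y \<notin> increase_unprofitable Q c' (a * D)"
  then have "y \<noteq> Q" and gain: "c' y < a * D" using y by (auto simp: increase_unprofitable_def)
  have "(H has_real_derivative D) (at (S - y + y))" using H' by simp
  moreover have "((\<lambda>t. S - y + t) has_real_derivative 1) (at y within {0..Q})"
    by (auto intro!: derivative_eq_intros)
  ultimately have "((\<lambda>t. H (S - y + t)) has_real_derivative D) (at y within {0..Q})"
    using DERIV_chain2 by fastforce
  from DERIV_diff[OF DERIV_cmult[OF this, of a] c']
  have "((\<lambda>t. a * H (S - y + t) - c t) has_real_derivative a * D - c' y) (at y within {0..Q})" .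
  from has_real_derivative_pos_inc_right[OF this] gain obtain d where d: "0 < d"
    "\<And>h. 0 < h \<Longrightarrow> y + h \<in> {0..Q} \<Longrightarrow> h < d \<Longrightarrow>
       a * H (S - y + y) - c y < a * H (S - y + (y + h)) - c (y + h)" by auto
  define h where "h = min (d/2) (Q - y)"
  have h: "0 < h" "y + h \<in> {0..Q}" "h < d" using d y \<open>y \<noteq> Q\<close> by (auto simp: h_def)
  from d(2)[OF h] best[OF h(2)] show False by simp
qed


section \<open>The least equilibrium aggregate of the noncooperators\<close>

lemma sum_interpolation:
  fixes l u :: "'i \<Rightarrow> real"
  assumes "\<And>j. j \<in> A \<Longrightarrow> l j \<le> u j" and "sum l A \<le> s" and "s \<le> sum u A"
  shows "\<exists>y. (\<forall>j\<in>A. l j \<le> y j \<and> y j \<le> u j) \<and> sum y A = s"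
proof -
  define t where "t = (if sum u A = sum l A then 0 else (s - sum l A) / (sum u A - sum l A))"
  have t: "0 \<le> t" "t \<le> 1" "sum l A + t * (sum u A - sum l A) = s"
    using assms(2,3) by (auto simp: t_def field_simps)
  define y where "y j = l j + t * (u j - l j)" for j
  have "l j \<le> y j \<and> y j \<le> u j" if "j \<in> A" for j
    using t assms(1)[OF that] mult_left_le[of t "u j - l j"] by (simp add: y_def mult.commute)
  moreover have "sum y A = s"
    using t(3) by (simp add: y_def sum.distrib sum_distrib_left sum_subtractf algebra_simps)
  ultimately show ?thesis by blast
qed

locale noncooperative_stage =
  fixes Q :: real and m :: nat and a :: "nat \<Rightarrow> real" and c' :: "nat \<Rightarrow> real \<Rightarrow> real"
    and D :: "real \<Rightarrow> real"
  assumes weight_nonneg: "\<And>j. j \<in> {1..m} \<Longrightarrow> 0 \<le> a j"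
    and marginal_cost: "\<And>j. j \<in> {1..m} \<Longrightarrow> marginal_cost Q (c' j)"
    and D_continuous: "continuous_on UNIV D" and D_antimono: "antimono D"
begin

abbreviation least_response :: "nat \<Rightarrow> real \<Rightarrow> real" where
  "least_response j S \<equiv> least_best_response Q (c' j) (a j * D S)"

abbreviation greatest_response :: "nat \<Rightarrow> real \<Rightarrow> real" where
  "greatest_response j S \<equiv> greatest_best_response Q (c' j) (a j * D S)"

text \<open>T is the cooperators' total. An aggregate S is sustained by an equilibrium of the
  noncooperators iff it lies between T plus the sums of their least and greatest responses to S.
  Only the lower bound enters the candidates: the least candidate satisfies the upper one
  automatically (see \<open>least_aggregate_le_greatest\<close>).\<close>

definition aggregate_candidates :: "real \<Rightarrow> real set" where
  "aggregate_candidates T = {S. T + (\<Sum>j\<in>{1..m}. least_response j S) \<le> S \<and> S \<le> T + m * Q}"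

definition least_aggregate :: "real \<Rightarrow> real" where
  "least_aggregate T = Inf (aggregate_candidates T)"

lemma least_response_bounds: "j \<in> {1..m} \<Longrightarrow> least_response j S \<in> {0..Q}"
  using marginal_cost.least_best_response_bounds[OF marginal_cost] .

lemma greatest_response_bounds: "j \<in> {1..m} \<Longrightarrow> greatest_response j S \<in> {0..Q}"
  using marginal_cost.greatest_best_response_bounds[OF marginal_cost] .

lemma least_response_antimono:
  assumes "j \<in> {1..m}" and "S \<le> S'"
  shows "least_response j S' \<le> least_response j S"
  using assms D_antimono weight_nonneg[OF assms(1)]
  by (intro marginal_cost.least_best_response_mono[OF marginal_cost] mult_left_mono)
    (auto dest: antimonoD)

lemma sum_least_response_bounds:
  "0 \<le> (\<Sum>j\<in>{1..m}. least_response j S)" "(\<Sum>j\<in>{1..m}. least_response j S) \<le> m * Q"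
proof -
  show "0 \<le> (\<Sum>j\<in>{1..m}. least_response j S)"
    using least_response_bounds by (intro sum_nonneg) auto
  have "(\<Sum>j\<in>{1..m}. least_response j S) \<le> (\<Sum>j\<in>{1..m}. Q)"
    using least_response_bounds by (intro sum_mono) auto
  then show "(\<Sum>j\<in>{1..m}. least_response j S) \<le> m * Q" by simp
qed

lemma price_tendsto:
  assumes "(\<sigma> \<longlongrightarrow> S) F"
  shows "((\<lambda>s. a j * D (\<sigma> s)) \<longlongrightarrow> a j * D S) F"
proof -
  have "isCont D S" using D_continuous by (simp add: continuous_on_eq_continuous_at)
  from isCont_tendsto_compose[OF this assms] show ?thesis by (rule tendsto_mult_left)
qed

lemma eventually_sum_least_response_gt:
  assumes "(\<sigma> \<longlongrightarrow> S) F" and "0 < e"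
  shows "eventually (\<lambda>s.
    (\<Sum>j\<in>{1..m}. least_response j S) - e < (\<Sum>j\<in>{1..m}. least_response j (\<sigma> s))) F"
proof (rule eventually_sum_gt)
  fix j and e' :: real assume "j \<in> {1..m}" "0 < e'"
  show "eventually (\<lambda>s. least_response j S - e' < least_response j (\<sigma> s)) F"
    by (rule marginal_cost.eventually_least_best_response_gt[OF marginal_cost price_tendsto])
      (use \<open>j \<in> {1..m}\<close> \<open>0 < e'\<close> assms in auto)
qed (use assms in auto)

lemma eventually_sum_least_response_lt:
  assumes "(\<sigma> \<longlongrightarrow> S) F" and "0 < e"
  shows "eventually (\<lambda>s.
    (\<Sum>j\<in>{1..m}. least_response j (\<sigma> s)) < (\<Sum>j\<in>{1..m}. greatest_response j S) + e) F"
proof -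
  have "eventually (\<lambda>s.
    (\<Sum>j\<in>{1..m}. - greatest_response j S) - e < (\<Sum>j\<in>{1..m}. - least_response j (\<sigma> s))) F"
  proof (rule eventually_sum_gt)
    fix j and e' :: real assume "j \<in> {1..m}" "0 < e'"
    have "eventually (\<lambda>s. least_response j (\<sigma> s) < greatest_response j S + e') F"
      by (rule marginal_cost.eventually_least_best_response_lt[OF marginal_cost price_tendsto])
        (use \<open>j \<in> {1..m}\<close> \<open>0 < e'\<close> assms in auto)
    then show "eventually (\<lambda>s. - greatest_response j S - e' < - least_response j (\<sigma> s)) F"
      by (simp add: algebra_simps)
  qed (use assms in auto)
  then show ?thesis by (simp add: sum_negf algebra_simps)
qed

lemma closed_aggregate_candidates: "closed (aggregate_candidates T)"
proof -
  \<comment> \<open>the sum of least responses is lower semicontinuous in S\<close>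
  have "open {S. S < T + (\<Sum>j\<in>{1..m}. least_response j S)}"
  proof (rule open_Collect_eventually)
    fix S assume "S < T + (\<Sum>j\<in>{1..m}. least_response j S)"
    then obtain e where e: "0 < e" "S + e = T + (\<Sum>j\<in>{1..m}. least_response j S)"
      by (metis add.commute diff_add_cancel diff_gt_0_iff_gt)
    have "eventually (\<lambda>S'.
      (\<Sum>j\<in>{1..m}. least_response j S) - e/2 < (\<Sum>j\<in>{1..m}. least_response j S')) (nhds S)"
      using e by (intro eventually_sum_least_response_gt filterlim_ident) auto
    moreover have "eventually (\<lambda>S'. S' < S + e/2) (nhds S)"
      using e by (intro order_tendstoD(2)[OF filterlim_ident]) auto
    ultimately show "eventually (\<lambda>S'. S' < T + (\<Sum>j\<in>{1..m}. least_response j S')) (nhds S)"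
      by eventually_elim (use e in linarith)
  qed
  then have "closed {S. \<not> S < T + (\<Sum>j\<in>{1..m}. least_response j S)}"
    by (rule closed_Collect_neg)
  then have "closed ({S. \<not> S < T + (\<Sum>j\<in>{1..m}. least_response j S)} \<inter> {..T + m * Q})"
    by (intro closed_Int closed_atMost)
  also have "\<dots> = aggregate_candidates T" by (auto simp: aggregate_candidates_def)
  finally show ?thesis .
qed

lemma aggregate_candidates_top: "T + m * Q \<in> aggregate_candidates T"
  using sum_least_response_bounds(2) by (auto simp: aggregate_candidates_def)

lemma aggregate_candidates_ge: "S \<in> aggregate_candidates T \<Longrightarrow> T \<le> S"
  using sum_least_response_bounds(1)[of S] by (auto simp: aggregate_candidates_def)

lemma bdd_below_aggregate_candidates: "bdd_below (aggregate_candidates T)"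
  by (rule bdd_belowI[of _ T]) (rule aggregate_candidates_ge)

lemma least_aggregate_mem: "least_aggregate T \<in> aggregate_candidates T"
  unfolding least_aggregate_def using aggregate_candidates_top
  by (intro closed_contains_Inf closed_aggregate_candidates bdd_below_aggregate_candidates) auto

lemma least_aggregate_le: "S \<in> aggregate_candidates T \<Longrightarrow> least_aggregate T \<le> S"
  unfolding least_aggregate_def by (intro cInf_lower bdd_below_aggregate_candidates)

lemma least_aggregate_le_greatest:
  "least_aggregate T \<le> T + (\<Sum>j\<in>{1..m}. greatest_response j (least_aggregate T))"
proof (rule ccontr)
  let ?S = "least_aggregate T"
  assume "\<not> ?thesis"
  then obtain e where e: "0 < e" "?S = T + (\<Sum>j\<in>{1..m}. greatest_response j ?S) + e"
    by (metis add.commute diff_add_cancel diff_gt_0_iff_gt not_le)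
  let ?G = "\<Sum>j\<in>{1..m}. greatest_response j ?S"
  have "eventually (\<lambda>S. (\<Sum>j\<in>{1..m}. least_response j S) < ?G + e/2) (at_left ?S)"
    using e by (intro eventually_sum_least_response_lt tendsto_ident_at) auto
  moreover have "eventually (\<lambda>S. S \<in> {?S - e/2<..<?S}) (at_left ?S)"
    using e by (intro eventually_at_left_real) auto
  ultimately obtain S where S: "(\<Sum>j\<in>{1..m}. least_response j S) < ?G + e/2" "S \<in> {?S - e/2<..<?S}"
    using eventually_happens'[OF trivial_limit_at_left_real] eventually_conj by blast
  have "S \<in> aggregate_candidates T"
    using S e least_aggregate_mem[of T] by (auto simp: aggregate_candidates_def)
  with S show False using least_aggregate_le by fastforce
qed

lemma least_aggregate_mono:
  assumes "T \<le> T'"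
  shows "least_aggregate T \<le> least_aggregate T'"
proof (cases "least_aggregate T' \<le> T + m * Q")
  case True
  with assms least_aggregate_mem[of T'] have "least_aggregate T' \<in> aggregate_candidates T"
    by (auto simp: aggregate_candidates_def)
  then show ?thesis by (rule least_aggregate_le)
next
  case False
  then show ?thesis using least_aggregate_le[OF aggregate_candidates_top, of T] by simp
qed

lemma least_aggregate_shift_le:
  assumes "0 \<le> d"
  shows "least_aggregate (T + d) \<le> least_aggregate T + d"
proof (rule least_aggregate_le)
  let ?S = "least_aggregate T"
  have "(\<Sum>j\<in>{1..m}. least_response j (?S + d)) \<le> (\<Sum>j\<in>{1..m}. least_response j ?S)"
    using assms by (intro sum_mono least_response_antimono) auto
  then show "?S + d \<in> aggregate_candidates (T + d)"
    using least_aggregate_mem[of T] by (auto simp: aggregate_candidates_def)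
qed

lemma lipschitz_least_aggregate: "1-lipschitz_on UNIV least_aggregate"
proof (rule lipschitz_onI)
  have "\<bar>least_aggregate T' - least_aggregate T\<bar> \<le> T' - T" if "T \<le> T'" for T T'
    using least_aggregate_mono[OF that] least_aggregate_shift_le[of "T' - T" T] that by simp
  then show "dist (least_aggregate T) (least_aggregate T') \<le> 1 * dist T T'" for T T'
    by (cases "T \<le> T'") (force simp: dist_real_def abs_minus_commute)+
qed simp

lemma least_aggregate_responses:
  obtains y where "\<And>j. j \<in> {1..m} \<Longrightarrow>
      least_response j (least_aggregate T) \<le> y j \<and> y j \<le> greatest_response j (least_aggregate T)"
    and "T + (\<Sum>j\<in>{1..m}. y j) = least_aggregate T"
proof -
  let ?S = "least_aggregate T"
  have "\<exists>y. (\<forall>j\<in>{1..m}. least_response j ?S \<le> y j \<and> y j \<le> greatest_response j ?S)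
            \<and> (\<Sum>j\<in>{1..m}. y j) = ?S - T"
    using least_aggregate_mem[of T] least_aggregate_le_greatest[of T]
      marginal_cost.least_le_greatest_best_response[OF marginal_cost]
    by (intro sum_interpolation) (auto simp: aggregate_candidates_def)
  then obtain y where "\<forall>j\<in>{1..m}. least_response j ?S \<le> y j \<and> y j \<le> greatest_response j ?S"
    and "(\<Sum>j\<in>{1..m}. y j) = ?S - T" by blast
  then show thesis by (intro that[of y]) auto
qed

end


section \<open>Partial cooperative leadership equilibria of regular games\<close>

lemma sum_fun_upd:
  fixes z :: "'i \<Rightarrow> 'a::ab_group_add"
  assumes "finite A" and "j \<in> A"
  shows "(\<Sum>i\<in>A. (z(j := t)) i) = (\<Sum>i\<in>A. z i) - z j + t"
proof -
  have "(\<Sum>i\<in>A - {j}. (z(j := t)) i) = (\<Sum>i\<in>A - {j}. z i)" by (rule sum.cong) auto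
  then show ?thesis using sum.remove[OF assms, of "z(j := t)"] sum.remove[OF assms, of z]
    by (simp add: algebra_simps)
qed

locale regular_game =
  fixes n :: nat and Q :: real and H :: "real \<Rightarrow> real" and \<alpha> :: "nat \<Rightarrow> real"
    and h g :: "nat \<Rightarrow> real \<Rightarrow> real" and k :: nat
    and H' :: "real \<Rightarrow> real" and g' :: "nat \<Rightarrow> real \<Rightarrow> real"
  assumes Q_nonneg: "0 \<le> Q" and weight_pos: "\<And>i. i \<in> {1..n} \<Longrightarrow> 0 < \<alpha> i"
    and h_id: "\<And>i t. i \<in> {1..n} \<Longrightarrow> t \<in> {0..Q} \<Longrightarrow> h i t = t"
    and H'_continuous: "continuous_on UNIV H'"
    and H_deriv: "\<And>t. (H has_real_derivative H' t) (at t)"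
    and H_mono: "mono H" and H_concave: "concave_on UNIV H"
    and g'_continuous: "\<And>i. i \<in> {1..n} \<Longrightarrow> continuous_on {0..Q} (g' i)"
    and g_deriv: "\<And>i t. i \<in> {1..n} \<Longrightarrow> t \<in> {0..Q} \<Longrightarrow>
      (g i has_real_derivative g' i t) (at t within {0..Q})"
    and g_convex: "\<And>i. i \<in> {1..n} \<Longrightarrow> convex_on {0..Q} (g i)"
    and k_le: "k \<le> n"

sublocale regular_game \<subseteq> noncooperative_stage Q "n - k" \<alpha> g' H'
proof (rule noncooperative_stage.intro)
  fix j assume "j \<in> {1..n - k}"
  then have j: "j \<in> {1..n}" by auto
  show "0 \<le> \<alpha> j" using weight_pos[OF j] by simp
next
  fix j assume "j \<in> {1..n - k}"
  then have j: "j \<in> {1..n}" by auto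
  show "marginal_cost Q (g' j)"
    using Q_nonneg g'_continuous[OF j] convex_on_Icc_imp_mono_derivative[OF g_convex g_deriv] j
    by unfold_locales auto
next
  show "continuous_on UNIV H'" by (rule H'_continuous)
next
  show "antimono H'" by (rule concave_on_UNIV_imp_antimono_derivative[OF H_concave H_deriv])
qed

context regular_game
begin

definition coop_total :: "(nat \<Rightarrow> real) \<Rightarrow> real" where
  "coop_total x = (\<Sum>i\<in>cooperators n k. x i)"

definition guaranteed_payoff :: "(nat \<Rightarrow> real) \<Rightarrow> real" where
  "guaranteed_payoff x =
     (\<Sum>i\<in>cooperators n k. \<alpha> i * H (least_aggregate (coop_total x)) - g i (x i))"

lemma profile_bounds: "x \<in> spg_profiles n Q \<Longrightarrow> i \<in> {1..n} \<Longrightarrow> x i \<in> {0..Q}"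
  by (simp add: spg_profiles_def)

lemma payoff_eq:
  assumes "x \<in> spg_profiles n Q"
  shows "spg_payoff n H \<alpha> h g i x = \<alpha> i * H (\<Sum>j\<in>{1..n}. x j) - g i (x i)"
  using assms h_id by (simp add: spg_payoff_def spg_profiles_def)

lemma payoff_fun_upd:
  assumes "x \<in> spg_profiles n Q" and "j \<in> {1..n}" and "t \<in> {0..Q}"
  shows "spg_payoff n H \<alpha> h g j (x(j := t)) = \<alpha> j * H ((\<Sum>i\<in>{1..n}. x i) - x j + t) - g j t"
proof -
  have xt: "x(j := t) \<in> spg_profiles n Q" using assms by (auto simp: spg_profiles_def)
  show ?thesis
    unfolding payoff_eq[OF xt] sum_fun_upd[OF finite_atLeastAtMost assms(2)] by simp
qed

lemma total_split: "(\<Sum>i\<in>{1..n}. x i) = coop_total x + (\<Sum>j\<in>{1..n - k}. x j)"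
proof -
  have "{1..n} = {1..n - k} \<union> cooperators n k" using k_le by (auto simp: cooperators_def)
  then show ?thesis
    by (simp add: coop_total_def sum.union_disjoint cooperators_def add.commute)
qed

lemma noncoop_NE_imp_least_response_le:
  assumes NE: "noncoop_NE n Q H \<alpha> h g k x" and j: "j \<in> {1..n - k}"
  shows "least_response j (\<Sum>i\<in>{1..n}. x i) \<le> x j"
proof -
  let ?S = "\<Sum>i\<in>{1..n}. x i"
  have x: "x \<in> spg_profiles n Q" using NE by (simp add: noncoop_NE_def)
  have jn: "j \<in> {1..n}" using j by auto
  have xj: "x j \<in> {0..Q}" by (rule profile_bounds[OF x jn])
  have "x j \<in> increase_unprofitable Q (g' j) (\<alpha> j * H' ?S)"
  proof (rule best_response_imp_increase_unprofitable[where c' = "g' j", OF H_deriv g_deriv[OF jn xj] xj])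
    fix t assume t: "t \<in> {0..Q}"
    with NE j have "spg_payoff n H \<alpha> h g j (x(j := t)) \<le> spg_payoff n H \<alpha> h g j x"
      by (simp add: noncoop_NE_def noncooperators_def)
    then show "\<alpha> j * H (?S - x j + t) - g j t \<le> \<alpha> j * H ?S - g j (x j)"
      by (simp add: payoff_fun_upd[OF x jn t] payoff_eq[OF x])
  qed
  then show ?thesis
    using marginal_cost.least_best_response_le_iff[OF marginal_cost[OF j] xj] by simp
qed

lemma noncoop_NE_if_responses:
  assumes x: "x \<in> spg_profiles n Q"
    and resp: "\<And>j. j \<in> {1..n - k} \<Longrightarrow>
      least_response j (\<Sum>i\<in>{1..n}. x i) \<le> x j \<and> x j \<le> greatest_response j (\<Sum>i\<in>{1..n}. x i)"
  shows "noncoop_NE n Q H \<alpha> h g k x"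
  unfolding noncoop_NE_def noncooperators_def
proof (intro conjI x ballI)
  fix j t assume j: "j \<in> {1..n - k}" and t: "t \<in> {0..Q}"
  have jn: "j \<in> {1..n}" using j by auto
  have xj: "x j \<in> {0..Q}" by (rule profile_bounds[OF x jn])
  let ?p = "\<alpha> j * H' (\<Sum>i\<in>{1..n}. x i)"
  have "x j \<in> increase_unprofitable Q (g' j) ?p" "x j \<in> decrease_unprofitable Q (g' j) ?p"
    using resp[OF j] marginal_cost.least_best_response_le_iff[OF marginal_cost[OF j] xj]
      marginal_cost.le_greatest_best_response_iff[OF marginal_cost[OF j] xj]
    by auto
  from first_order_conditions_imp_best_response[OF H_concave H_deriv g_convex[OF jn]
      g_deriv[OF jn xj] _ this t] weight_pos[OF jn]
  show "spg_payoff n H \<alpha> h g j (x(j := t)) \<le> spg_payoff n H \<alpha> h g j x"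
    by (simp add: payoff_fun_upd[OF x jn t] payoff_eq[OF x])
qed

lemma least_aggregate_le_NE_total:
  assumes NE: "noncoop_NE n Q H \<alpha> h g k x"
  shows "least_aggregate (coop_total x) \<le> (\<Sum>i\<in>{1..n}. x i)"
proof (rule least_aggregate_le)
  let ?S = "\<Sum>i\<in>{1..n}. x i"
  have x: "x \<in> spg_profiles n Q" using NE by (simp add: noncoop_NE_def)
  have "(\<Sum>j\<in>{1..n - k}. least_response j ?S) \<le> (\<Sum>j\<in>{1..n - k}. x j)"
    using noncoop_NE_imp_least_response_le[OF NE] by (intro sum_mono) auto
  moreover have "(\<Sum>j\<in>{1..n - k}. x j) \<le> (\<Sum>j\<in>{1..n - k}. Q)"
    using profile_bounds[OF x] by (intro sum_mono) auto
  ultimately show "?S \<in> aggregate_candidates (coop_total x)"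
    using total_split[of x] by (simp add: aggregate_candidates_def)
qed

lemma NE_given_least_aggregate:
  assumes x: "x \<in> spg_profiles n Q"
  obtains z where "z \<in> NE_given n Q H \<alpha> h g k x"
    and "(\<Sum>i\<in>{1..n}. z i) = least_aggregate (coop_total x)"
proof -
  let ?S = "least_aggregate (coop_total x)"
  obtain y where y: "\<And>j. j \<in> {1..n - k} \<Longrightarrow> least_response j ?S \<le> y j \<and> y j \<le> greatest_response j ?S"
    and total: "coop_total x + (\<Sum>j\<in>{1..n - k}. y j) = ?S"
    by (rule least_aggregate_responses[of "coop_total x"]) blast
  define z where "z i = (if i \<in> {1..n - k} then y i else x i)" for i
  have "coop_total z = coop_total x"
    unfolding coop_total_def by (rule sum.cong) (auto simp: z_def cooperators_def)
  moreover have "(\<Sum>j\<in>{1..n - k}. z j) = (\<Sum>j\<in>{1..n - k}. y j)"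
    by (rule sum.cong) (auto simp: z_def)
  ultimately have Sz: "(\<Sum>i\<in>{1..n}. z i) = ?S" using total total_split[of z] by linarith
  have "z i \<in> {0..Q}" if i: "i \<in> {1..n}" for i
  proof (cases "i \<in> {1..n - k}")
    case True
    then show ?thesis
      using y[OF True] least_response_bounds[OF True, of ?S] greatest_response_bounds[OF True, of ?S]
      by (auto simp: z_def)
  qed (use x i in \<open>simp add: z_def spg_profiles_def\<close>)
  then have "z \<in> spg_profiles n Q" by (simp add: spg_profiles_def)
  then have "noncoop_NE n Q H \<alpha> h g k z"
  proof (rule noncoop_NE_if_responses)
    fix j assume "j \<in> {1..n - k}"
    then show "least_response j (\<Sum>i\<in>{1..n}. z i) \<le> z j
        \<and> z j \<le> greatest_response j (\<Sum>i\<in>{1..n}. z i)"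
      unfolding Sz using y by (simp add: z_def)
  qed
  then have "z \<in> NE_given n Q H \<alpha> h g k x" by (auto simp: NE_given_def z_def cooperators_def)
  then show thesis using Sz by (rule that)
qed

lemma coop_sum_eq:
  assumes "z \<in> spg_profiles n Q"
  shows "coop_sum n H \<alpha> h g k z
    = (\<Sum>i\<in>cooperators n k. \<alpha> i * H (\<Sum>j\<in>{1..n}. z j) - g i (z i))"
  using assms by (simp add: coop_sum_def payoff_eq)

text \<open>As H is increasing, an equilibrium with the least aggregate is the worst for the cooperators.\<close>

lemma worst_equilibrium:
  assumes x: "x \<in> spg_profiles n Q"
  obtains z where "z \<in> NE_given n Q H \<alpha> h g k x" and "coop_sum n H \<alpha> h g k z = guaranteed_payoff x"
    and "\<And>w. w \<in> NE_given n Q H \<alpha> h g k x \<Longrightarrow>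
      coop_sum n H \<alpha> h g k z \<le> coop_sum n H \<alpha> h g k w"
proof -
  obtain z where z: "z \<in> NE_given n Q H \<alpha> h g k x"
    and Sz: "(\<Sum>i\<in>{1..n}. z i) = least_aggregate (coop_total x)"
    using NE_given_least_aggregate[OF x] by blast
  have z_prof: "z \<in> spg_profiles n Q" and z_coop: "\<And>i. i \<in> cooperators n k \<Longrightarrow> z i = x i"
    using z by (simp_all add: NE_given_def noncoop_NE_def)
  have "coop_sum n H \<alpha> h g k z = guaranteed_payoff x"
    unfolding coop_sum_eq[OF z_prof] Sz guaranteed_payoff_def by (rule sum.cong) (simp_all add: z_coop)
  moreover have "coop_sum n H \<alpha> h g k z \<le> coop_sum n H \<alpha> h g k w"
    if w: "w \<in> NE_given n Q H \<alpha> h g k x" for w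
  proof -
    have "coop_total w = coop_total x" using w by (simp add: coop_total_def NE_given_def)
    then have "least_aggregate (coop_total x) \<le> (\<Sum>j\<in>{1..n}. w j)"
      using least_aggregate_le_NE_total w by (force simp: NE_given_def)
    then have "H (\<Sum>j\<in>{1..n}. z j) \<le> H (\<Sum>j\<in>{1..n}. w j)"
      unfolding Sz by (rule monoD[OF H_mono])
    then have "\<alpha> i * H (\<Sum>j\<in>{1..n}. z j) - g i (z i) \<le> \<alpha> i * H (\<Sum>j\<in>{1..n}. w j) - g i (w i)"
      if "i \<in> cooperators n k" for i
      using that z w weight_pos[of i] k_le by (auto simp: NE_given_def cooperators_def)
    then show ?thesis
      using z w by (simp add: coop_sum_eq NE_given_def noncoop_NE_def sum_mono)
  qed
  ultimately show thesis using z that by blast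
qed

lemma tilde_pi_eq:
  assumes "x \<in> spg_profiles n Q"
  shows "tilde_pi n Q H \<alpha> h g k x = guaranteed_payoff x"
proof -
  obtain z where z: "z \<in> NE_given n Q H \<alpha> h g k x"
    and zx: "coop_sum n H \<alpha> h g k z = guaranteed_payoff x"
    and worst: "\<And>w. w \<in> NE_given n Q H \<alpha> h g k x \<Longrightarrow>
      coop_sum n H \<alpha> h g k z \<le> coop_sum n H \<alpha> h g k w"
    using worst_equilibrium[OF assms] by blast
  show ?thesis unfolding tilde_pi_def
  proof (rule cInf_eq_minimum)
    show "guaranteed_payoff x \<in> coop_sum n H \<alpha> h g k ` NE_given n Q H \<alpha> h g k x"
      by (rule image_eqI[of _ "coop_sum n H \<alpha> h g k" z]) (simp_all add: zx z)
  next
    fix s assume "s \<in> coop_sum n H \<alpha> h g k ` NE_given n Q H \<alpha> h g k x"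
    then show "guaranteed_payoff x \<le> s" using worst zx by auto
  qed
qed

text \<open>The guaranteed payoff depends only on the cooperators' strategies, so it suffices to maximise
  it over the profiles in which the noncooperators play 0.\<close>

definition coop_profiles :: "(nat \<Rightarrow> real) set" where
  "coop_profiles = PiE UNIV (\<lambda>i. if i \<in> cooperators n k then {0..Q} else {0})"

lemma coop_profiles_coordinate:
  "x \<in> coop_profiles \<Longrightarrow> x i \<in> (if i \<in> cooperators n k then {0..Q} else {0})"
  by (simp add: coop_profiles_def PiE_iff)

lemma compact_coop_profiles: "compact coop_profiles"
proof -
  have "compactin (product_topology (\<lambda>i. euclidean) UNIV) coop_profiles"
    unfolding coop_profiles_def by (subst compactin_PiE) auto
  then show ?thesis by (simp add: euclidean_product_topology)
qed

lemma continuous_on_guaranteed_payoff: "continuous_on coop_profiles guaranteed_payoff"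
proof -
  have coord: "continuous_on coop_profiles (\<lambda>x. x i)" for i
    by (rule continuous_on_subset[OF continuous_on_product_coordinates]) simp
  have "continuous_on UNIV H"
    using H_deriv by (intro continuous_at_imp_continuous_on) (blast intro: DERIV_isCont)
  moreover have "continuous_on UNIV least_aggregate"
    by (rule lipschitz_on_continuous_on[OF lipschitz_least_aggregate])
  moreover have "continuous_on coop_profiles coop_total"
    unfolding coop_total_def by (intro continuous_on_sum coord)
  ultimately have "continuous_on coop_profiles (\<lambda>x. H (least_aggregate (coop_total x)))"
    by (auto intro!: continuous_on_compose2[of UNIV H] continuous_on_compose2[of UNIV least_aggregate])
  moreover have "continuous_on coop_profiles (\<lambda>x. g i (x i))" if i: "i \<in> cooperators n k" for i
  proof (rule continuous_on_compose2[OF _ coord])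
    show "continuous_on {0..Q} (g i)"
      using i k_le by (intro DERIV_continuous_on[where D = "g' i"] g_deriv) (auto simp: cooperators_def)
    show "(\<lambda>x. x i) ` coop_profiles \<subseteq> {0..Q}"
      using i coop_profiles_coordinate[of _ i] by auto
  qed
  ultimately show ?thesis unfolding guaranteed_payoff_def
    by (intro continuous_on_sum continuous_on_diff continuous_on_mult continuous_on_const)
qed

lemma guaranteed_payoff_cong:
  "(\<And>i. i \<in> cooperators n k \<Longrightarrow> x i = y i) \<Longrightarrow> guaranteed_payoff x = guaranteed_payoff y"
  by (simp add: guaranteed_payoff_def coop_total_def)

theorem PCLE_exists: "\<exists>x. is_PCLE n Q H \<alpha> h g k x"
proof -
  have "coop_profiles \<noteq> {}" using Q_nonneg by (auto simp: coop_profiles_def PiE_eq_empty_iff)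
  then obtain x where x: "x \<in> coop_profiles"
    and max: "\<And>y. y \<in> coop_profiles \<Longrightarrow> guaranteed_payoff y \<le> guaranteed_payoff x"
    using continuous_attains_sup[OF compact_coop_profiles _ continuous_on_guaranteed_payoff] by blast
  have "x i \<in> {0..Q}" for i
  proof -
    from coop_profiles_coordinate[OF x, of i] show ?thesis using Q_nonneg by (simp split: if_splits)
  qed
  then have "x \<in> spg_profiles n Q" by (simp add: spg_profiles_def)
  then obtain z where z: "z \<in> NE_given n Q H \<alpha> h g k x" and zx: "coop_sum n H \<alpha> h g k z = guaranteed_payoff x"
    and worst: "\<And>w. w \<in> NE_given n Q H \<alpha> h g k x \<Longrightarrow> coop_sum n H \<alpha> h g k z \<le> coop_sum n H \<alpha> h g k w"
    using worst_equilibrium by blast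
  have z_coop: "\<And>i. i \<in> cooperators n k \<Longrightarrow> z i = x i" using z by (simp add: NE_given_def)
  then have NE_z: "NE_given n Q H \<alpha> h g k z = NE_given n Q H \<alpha> h g k x" by (auto simp: NE_given_def)
  have z_prof: "z \<in> spg_profiles n Q" using z by (simp add: NE_given_def noncoop_NE_def)
  have "tilde_pi n Q H \<alpha> h g k y \<le> tilde_pi n Q H \<alpha> h g k z" if y: "y \<in> spg_profiles n Q" for y
  proof -
    define y' where "y' i = (if i \<in> cooperators n k then y i else 0)" for i
    have "y' \<in> coop_profiles"
      using y k_le by (auto simp: y'_def coop_profiles_def spg_profiles_def cooperators_def)
    then have "guaranteed_payoff y \<le> guaranteed_payoff x"
      using max guaranteed_payoff_cong[of y y'] by (simp add: y'_def)
    then show ?thesis using y z_prof tilde_pi_eq guaranteed_payoff_cong[OF z_coop] by simp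
  qed
  then show ?thesis using z_prof z worst NE_z zx unfolding is_PCLE_def by (auto simp: NE_given_def)
qed

end

theorem proposition6:
  fixes n :: nat and Q :: real and H :: "real \<Rightarrow> real" and \<alpha> :: "nat \<Rightarrow> real"
    and h g :: "nat \<Rightarrow> real \<Rightarrow> real" and k :: nat
  assumes "regular_spg n Q H \<alpha> h g"
    and "k \<in> {2..n}"
  shows "\<exists>x. is_PCLE n Q H \<alpha> h g k x"
proof -
  obtain H' where H': "continuous_on UNIV H'" "\<And>t. (H has_real_derivative H' t) (at t)"
    using assms(1) by (auto simp: regular_spg_def)
  have "\<forall>i\<in>{1..n}. \<exists>c'. continuous_on {0..Q} c'
          \<and> (\<forall>t\<in>{0..Q}. (g i has_real_derivative c' t) (at t within {0..Q}))"
    using assms(1) by (simp add: regular_spg_def continuously_differentiable_on_interval_def)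
  then obtain g' where g': "\<forall>i\<in>{1..n}. continuous_on {0..Q} (g' i)
          \<and> (\<forall>t\<in>{0..Q}. (g i has_real_derivative g' i t) (at t within {0..Q}))"
    by (metis bchoice)
  \<comment> \<open>of \<open>k \<in> {2..n}\<close> only \<open>k \<le> n\<close> is needed\<close>
  interpret regular_game n Q H \<alpha> h g k H' g'
    using assms H' g' by unfold_locales (auto simp: regular_spg_def social_purpose_game_def)
  show ?thesis by (rule PCLE_exists)
qed

end
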